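(* For every real number $\epsilon>0$ and every fixed natural number $r\ge 2$, with probability tending to $1$ as $n\to\infty$, $$\chi\left(\widetilde{C}_{\mathrm{Hom}_p(K_r,\,G(n,\frac12))}\right)\leq \left(r+\frac{2}{r-1}+\epsilon\right)\log_2 n.$$
   Context: $G(n,p)$ is the random graph on labeled vertex set $[n]=\{1,\dots,n\}$ in which each edge appears independently with probability $p$. For graphs $F$ with $V(F)=[r]$ and $H$, the Hom-poset $\mathrm{Hom}_p(F,H)$ consists of all $r$-tuples $(A_1,\dots,A_r)$ of non-empty subsets of $V(H)$ such that for every edge $\{i,j\}$ of $F$ and every $x\in A_i$, $y\in A_j$, $\{x,y\}$ is an edge of $H$; it is ordered by $(A_1,\dots,A_r)\le(B_1,\dots,B_r)$ iff $A_i\subseteq B_i$ for all $i$. $K_r$ is the complete graph on $[r]$. The cyclic group $\mathbb{Z}_r=\{\omega^0=e,\omega,\dots,\omega^{r-1}\}$ acts on $\mathrm{Hom}_p(K_r,H)$ by cyclic shift: $\omega^i\cdot(A_1,\dots,A_r)=(A_{1+i},\dots,A_{r+i})$, indices taken modulo $r$ in $[r]$; this makes it a free $\mathbb{Z}_r$-poset. For a $G$-poset $P$ (order-preserving $G$-action) with $[x]=\{g\cdot x:g\in G\}$, the strong compatibility graph $\widetilde{C}_P$ has vertex set $P$, with $x,y$ adjacent if there is $g\in G\setminus\{e\}$ such that $x$ and $g\cdot y$ are comparable and $y\notin[x]$. $\chi$ is the chromatic number. *)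

theory Defs
  imports "HOL-Probability.Probability"
begin

definition vertex_pairs :: "nat \<Rightarrow> nat set set" where
  "vertex_pairs n = {{x, y} | x y. x \<in> {1..n} \<and> y \<in> {1..n} \<and> x \<noteq> y}"

definition all_graphs :: "nat \<Rightarrow> nat set set set" where
  "all_graphs n = Pow (vertex_pairs n)"

text \<open>G(n,1/2): each edge independently with probability 1/2, i.e. the uniform
  distribution on all labelled graphs on [n].\<close>

definition gnp_half :: "nat \<Rightarrow> nat set set pmf" where
  "gnp_half n = pmf_of_set (all_graphs n)"

text \<open>Hom-poset Hom_p(K_r, H) for H = (V, E). An r-tuple (A_1,...,A_r) is encoded
  0-based as a function A with A i for i < r, and A i = {} for i \<ge> r.\<close>

definition hom_Kr :: "nat \<Rightarrow> nat set \<Rightarrow> nat set set \<Rightarrow> (nat \<Rightarrow> nat set) set" where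
  "hom_Kr r V E = {A. (\<forall>i<r. A i \<noteq> {} \<and> A i \<subseteq> V) \<and> (\<forall>i. r \<le> i \<longrightarrow> A i = {}) \<and>
       (\<forall>i<r. \<forall>j<r. i \<noteq> j \<longrightarrow> (\<forall>x\<in>A i. \<forall>y\<in>A j. {x, y} \<in> E))}"

definition hom_le :: "nat \<Rightarrow> (nat \<Rightarrow> nat set) \<Rightarrow> (nat \<Rightarrow> nat set) \<Rightarrow> bool" where
  "hom_le r A B \<longleftrightarrow> (\<forall>i<r. A i \<subseteq> B i)"

definition cshift :: "nat \<Rightarrow> nat \<Rightarrow> (nat \<Rightarrow> nat set) \<Rightarrow> (nat \<Rightarrow> nat set)" where
  "cshift r k A = (\<lambda>i. if i < r then A ((i + k) mod r) else {})"

definition orbit :: "nat \<Rightarrow> (nat \<Rightarrow> nat set) \<Rightarrow> (nat \<Rightarrow> nat set) set" where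
  "orbit r A = {cshift r k A | k. k < r}"

definition strong_compat :: "nat \<Rightarrow> (nat \<Rightarrow> nat set) \<Rightarrow> (nat \<Rightarrow> nat set) \<Rightarrow> bool" where
  "strong_compat r x y \<longleftrightarrow>
     (\<exists>k. 1 \<le> k \<and> k < r \<and> (hom_le r x (cshift r k y) \<or> hom_le r (cshift r k y) x)) \<and>
     y \<notin> orbit r x"

definition chromatic_number :: "'a set \<Rightarrow> ('a \<Rightarrow> 'a \<Rightarrow> bool) \<Rightarrow> nat" where
  "chromatic_number V adj =
     (LEAST k. \<exists>c :: 'a \<Rightarrow> nat. (\<forall>v\<in>V. c v < k) \<and>
                  (\<forall>u\<in>V. \<forall>v\<in>V. adj u v \<longrightarrow> c u \<noteq> c v))"

end

theory Submission
  imports Defs "HOL-Real_Asymp.Real_Asymp"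
begin

text \<open>Call a graph light for a threshold T if in every tuple of its Hom-poset the parts other
  than a largest one have total size less than T. In a light graph, colour a tuple by its total
  size if all its parts have fewer than T elements (fewer than 2T colours), and otherwise by the
  index of its unique part with at least T elements (r further colours). Two adjacent tuples are
  comparable up to a non-trivial cyclic shift: in the first case this changes the total size
  strictly, in the second it moves the large part to another index. So a light graph needs at
  most 2T + r colours.

  A graph that is not light contains a complete r-partite subgraph on disjoint parts of total
  size s with T \<le> s \<le> 2T and at least sT/2 edges. A union bound over the at most
  C(rn, s) such configurations shows that G(n,1/2) is light with high probability once
  T = (2+\<delta>) log2 n, giving the bound (4+\<epsilon>) log2 n; and 4 \<le> r + 2/(r-1) for every r \<ge> 2.\<close>

lemma add_mod_ne_self:
  fixes j k r :: nat
  assumes "j < r" "0 < k" "k < r"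
  shows "(j + k) mod r \<noteq> j"
  using assms by (cases "j + k < r") (auto simp: le_mod_geq)

lemma add_diff_mod_add_mod:
  fixes j k r :: nat
  assumes "j < r" "k \<le> r"
  shows "((j + (r - k)) mod r + k) mod r = j"
proof -
  have "((j + (r - k)) mod r + k) mod r = (j + (r - k) + k) mod r" by (simp add: mod_add_left_eq)
  also have "\<dots> = (j + r) mod r" using assms by simp
  finally show ?thesis using assms by simp
qed

lemma bij_betw_add_mod:
  fixes k r :: nat
  assumes "0 < r"
  shows "bij_betw (\<lambda>i. (i + k) mod r) {..<r} {..<r}"
proof -
  have mod_less_double: "x mod r = (if x < r then x else x - r)" if "x < 2 * r" for x
    using that by (simp add: le_mod_geq)
  have "inj_on (\<lambda>i. (i + k) mod r) {..<r}"
  proof (rule inj_onI)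
    fix a b assume "a \<in> {..<r}" "b \<in> {..<r}" "(a + k) mod r = (b + k) mod r"
    then have "(a + k mod r) mod r = (b + k mod r) mod r" "a < r" "b < r" "k mod r < r"
      using assms by (simp_all add: mod_add_right_eq)
    then show "a = b"
      using mod_less_double[of "a + k mod r"] mod_less_double[of "b + k mod r"]
      by (auto split: if_splits)
  qed
  moreover have "(\<lambda>i. (i + k) mod r) ` {..<r} \<subseteq> {..<r}" using assms by auto
  ultimately show ?thesis by (simp add: bij_betw_def endo_inj_surj)
qed

lemma cshift_diff_cshift:
  assumes "\<forall>i. r \<le> i \<longrightarrow> v i = {}" "k \<le> r"
  shows "cshift r (r - k) (cshift r k v) = v"
proof
  fix i
  show "cshift r (r - k) (cshift r k v) i = v i"
    using assms add_diff_mod_add_mod[of i r k] unfolding cshift_def by auto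
qed

lemma hom_Kr_part_subset: "x \<in> hom_Kr r V E \<Longrightarrow> i < r \<Longrightarrow> x i \<subseteq> V"
  unfolding hom_Kr_def by auto

lemma finite_hom_Kr_part: "x \<in> hom_Kr r {1..n} E \<Longrightarrow> i < r \<Longrightarrow> finite (x i)"
  by (meson finite_atLeastAtMost finite_subset hom_Kr_part_subset)

lemma hom_Kr_part_empty: "x \<in> hom_Kr r V E \<Longrightarrow> r \<le> i \<Longrightarrow> x i = {}"
  unfolding hom_Kr_def by auto

lemma hom_Kr_edge:
  assumes "x \<in> hom_Kr r V E" "i < r" "i' < r" "i \<noteq> i'" "a \<in> x i" "b \<in> x i'"
  shows "{a, b} \<in> E"
  using assms unfolding hom_Kr_def by blast

lemma hom_Kr_parts_disjoint:
  assumes "x \<in> hom_Kr r {1..n} E" "E \<subseteq> vertex_pairs n" "i < r" "i' < r" "i \<noteq> i'"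
  shows "x i \<inter> x i' = {}"
proof (rule ccontr)
  assume "x i \<inter> x i' \<noteq> {}"
  then obtain a where "a \<in> x i" "a \<in> x i'" by auto
  then have "{a} \<in> vertex_pairs n" using hom_Kr_edge[OF assms(1,3-5)] assms(2) by fastforce
  then show False unfolding vertex_pairs_def by (auto simp: doubleton_eq_iff)
qed

lemma strong_compat_obtain_shift:
  assumes "strong_compat r u v" "\<forall>i. r \<le> i \<longrightarrow> v i = {}"
  obtains k where "0 < k" "k < r" "u \<noteq> cshift r k v"
    "hom_le r u (cshift r k v) \<or> hom_le r (cshift r k v) u"
proof -
  obtain k where k: "1 \<le> k" "k < r"
    and cmp: "hom_le r u (cshift r k v) \<or> hom_le r (cshift r k v) u"
    and not_orbit: "v \<notin> orbit r u"
    using assms(1) unfolding strong_compat_def by blast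
  have "u \<noteq> cshift r k v"
  proof
    assume "u = cshift r k v"
    then have "cshift r (r - k) u = v" using cshift_diff_cshift[OF assms(2)] k by simp
    then have "v \<in> orbit r u" unfolding orbit_def using k by force
    with not_orbit show False ..
  qed
  then show ?thesis using that k cmp by (simp add: Suc_le_eq)
qed

definition total_size :: "nat \<Rightarrow> (nat \<Rightarrow> nat set) \<Rightarrow> nat" where
  "total_size r x = (\<Sum>i<r. card (x i))"

lemma total_size_cshift:
  assumes "0 < r"
  shows "total_size r (cshift r k v) = total_size r v"
proof -
  have "total_size r (cshift r k v) = (\<Sum>i<r. card (v ((i + k) mod r)))"
    unfolding total_size_def cshift_def by simp
  also have "\<dots> = total_size r v"
    unfolding total_size_def
    using sum.reindex_bij_betw[OF bij_betw_add_mod[OF assms], of "\<lambda>i. card (v i)"] by simp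
  finally show ?thesis .
qed

lemma total_size_strict_mono:
  assumes "hom_le r u w" "u \<noteq> w"
    and "\<forall>i. r \<le> i \<longrightarrow> u i = {}" "\<forall>i. r \<le> i \<longrightarrow> w i = {}" "\<forall>i<r. finite (w i)"
  shows "total_size r u < total_size r w"
proof -
  obtain i where i: "u i \<noteq> w i" using assms(2) by (meson ext)
  then have "i < r" using assms(3,4) by (metis not_le)
  then have "u i \<subset> w i" using i assms(1) unfolding hom_le_def by auto
  then have "card (u i) < card (w i)" using assms(5) \<open>i < r\<close> by (simp add: psubset_card_mono)
  moreover have "\<forall>i\<in>{..<r}. card (u i) \<le> card (w i)"
    using assms(1,5) unfolding hom_le_def by (auto intro: card_mono)
  ultimately show ?thesis unfolding total_size_def using \<open>i < r\<close>
    by (intro sum_strict_mono_ex1) auto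
qed

lemma total_size_neq_of_comparable_shift:
  assumes u: "u \<in> hom_Kr r {1..n} E" and v: "v \<in> hom_Kr r {1..n} E" and "0 < r"
    and cmp: "hom_le r u (cshift r k v) \<or> hom_le r (cshift r k v) u"
    and "u \<noteq> cshift r k v"
  shows "total_size r u \<noteq> total_size r v"
proof -
  have u_parts: "\<forall>i. r \<le> i \<longrightarrow> u i = {}" "\<forall>i<r. finite (u i)"
    using hom_Kr_part_empty[OF u] finite_hom_Kr_part[OF u] by blast+
  have w_parts: "\<forall>i. r \<le> i \<longrightarrow> cshift r k v i = {}" "\<forall>i<r. finite (cshift r k v i)"
    using finite_hom_Kr_part[OF v] \<open>0 < r\<close> unfolding cshift_def by simp_all
  have "total_size r u \<noteq> total_size r (cshift r k v)"
    using cmp total_size_strict_mono[OF _ \<open>u \<noteq> _\<close> u_parts(1) w_parts]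
      total_size_strict_mono[OF _ \<open>u \<noteq> _\<close>[symmetric] w_parts(1) u_parts] by fastforce
  then show ?thesis using total_size_cshift[OF \<open>0 < r\<close>] by simp
qed

definition hom_light :: "nat \<Rightarrow> nat \<Rightarrow> nat \<Rightarrow> nat set set \<Rightarrow> bool" where
  "hom_light r T n E \<longleftrightarrow> (\<forall>x\<in>hom_Kr r {1..n} E. \<forall>j<r.
      (\<forall>i<r. card (x i) \<le> card (x j)) \<longrightarrow> (\<Sum>i\<in>{..<r} - {j}. card (x i)) < T)"

lemma exists_largest_part:
  fixes r :: nat and x :: "nat \<Rightarrow> 'a set"
  assumes "0 < r"
  obtains j where "j < r" "\<forall>i<r. card (x i) \<le> card (x j)"
proof -
  have "Max ((\<lambda>i. card (x i)) ` {..<r}) \<in> (\<lambda>i. card (x i)) ` {..<r}"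
    using assms by (intro Max_in finite_imageI) auto
  then obtain j where "j < r" "card (x j) = Max ((\<lambda>i. card (x i)) ` {..<r})" by auto
  with that show ?thesis by simp
qed

lemma hom_light_total_size_less:
  assumes "hom_light r T n E" "x \<in> hom_Kr r {1..n} E" "0 < r" "\<forall>i<r. card (x i) < T"
  shows "total_size r x < 2 * T"
proof -
  obtain j where j: "j < r" "\<forall>i<r. card (x i) \<le> card (x j)"
    using exists_largest_part[OF assms(3)] .
  have "(\<Sum>i\<in>{..<r} - {j}. card (x i)) < T" using assms(1,2) j unfolding hom_light_def by blast
  moreover have "card (x j) < T" using assms(4) j by auto
  moreover have "(\<Sum>i<r. card (x i)) = card (x j) + (\<Sum>i\<in>{..<r} - {j}. card (x i))"
    using j(1) by (simp add: sum.remove)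
  ultimately show ?thesis unfolding total_size_def by linarith
qed

lemma hom_light_heavy_part_unique:
  assumes "hom_light r T n E" "x \<in> hom_Kr r {1..n} E"
    and "i < r" "T \<le> card (x i)" "i' < r" "T \<le> card (x i')"
  shows "i = i'"
proof -
  obtain j where j: "j < r" "\<forall>i<r. card (x i) \<le> card (x j)"
    using exists_largest_part[of r x] assms(3) by auto
  have rest: "(\<Sum>i\<in>{..<r} - {j}. card (x i)) < T"
    using assms(1,2) j unfolding hom_light_def by blast
  have heavy_is_j: "l = j" if "l < r" "T \<le> card (x l)" for l
  proof (rule ccontr)
    assume "l \<noteq> j"
    then have "card (x l) \<le> (\<Sum>i\<in>{..<r} - {j}. card (x i))"
      using that by (intro member_le_sum) auto
    with rest that show False by linarith
  qed
  show ?thesis using heavy_is_j[OF assms(3,4)] heavy_is_j[OF assms(5,6)] by simp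
qed

definition light_colour :: "nat \<Rightarrow> nat \<Rightarrow> (nat \<Rightarrow> nat set) \<Rightarrow> nat" where
  "light_colour r T x =
     (if \<forall>i<r. card (x i) < T then total_size r x else 2 * T + (SOME j. j < r \<and> T \<le> card (x j)))"

lemma light_colour_heavy:
  assumes "\<not> (\<forall>i<r. card (x i) < T)"
  obtains j where "j < r" "T \<le> card (x j)" "light_colour r T x = 2 * T + j"
proof -
  let ?j = "SOME j. j < r \<and> T \<le> card (x j)"
  have "\<exists>j. j < r \<and> T \<le> card (x j)" using assms by (auto simp: not_less)
  then have "?j < r \<and> T \<le> card (x ?j)" by (rule someI_ex)
  moreover have "light_colour r T x = 2 * T + ?j"
    unfolding light_colour_def by (rule if_not_P[OF assms])
  ultimately show ?thesis using that by blast
qed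

lemma light_colour_less_iff:
  assumes "hom_light r T n E" "x \<in> hom_Kr r {1..n} E" "0 < r"
  shows "light_colour r T x < 2 * T \<longleftrightarrow> (\<forall>i<r. card (x i) < T)"
proof (cases "\<forall>i<r. card (x i) < T")
  case True
  then show ?thesis using hom_light_total_size_less[OF assms] unfolding light_colour_def by simp
next
  case False
  then obtain j where "light_colour r T x = 2 * T + j" using light_colour_heavy by blast
  with False show ?thesis by simp
qed

lemma light_colour_less:
  assumes "hom_light r T n E" "x \<in> hom_Kr r {1..n} E" "0 < r"
  shows "light_colour r T x < 2 * T + r"
proof (cases "\<forall>i<r. card (x i) < T")
  case True
  then show ?thesis using light_colour_less_iff[OF assms] by simp
next
  case False
  then show ?thesis using light_colour_heavy[OF False] by (metis add_less_cancel_left)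
qed

lemma comparable_shift_moves_heavy_part:
  assumes light: "hom_light r T n E"
    and u: "u \<in> hom_Kr r {1..n} E" and v: "v \<in> hom_Kr r {1..n} E"
    and k: "0 < k" "k < r"
    and cmp: "hom_le r u (cshift r k v) \<or> hom_le r (cshift r k v) u"
    and j: "j < r" "T \<le> card (u j)" "T \<le> card (v j)"
  shows False
  using cmp
proof
  assume "hom_le r u (cshift r k v)"
  then have "u j \<subseteq> v ((j + k) mod r)" using j unfolding hom_le_def cshift_def by auto
  moreover have "finite (v ((j + k) mod r))" using finite_hom_Kr_part[OF v] k by simp
  ultimately have "T \<le> card (v ((j + k) mod r))" using j(2) card_mono order_trans by blast
  moreover have "(j + k) mod r < r" using k by simp
  ultimately have "(j + k) mod r = j"
    using hom_light_heavy_part_unique[OF light v _ _ j(1,3)] by blast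
  then show False using add_mod_ne_self[OF j(1) k] by simp
next
  assume le: "hom_le r (cshift r k v) u"
  define i where "i = (j + (r - k)) mod r"
  have "i < r" unfolding i_def using k by simp
  moreover have "cshift r k v i = v j"
    using add_diff_mod_add_mod[OF j(1), of k] k \<open>i < r\<close> unfolding i_def cshift_def by simp
  ultimately have "v j \<subseteq> u i" using le unfolding hom_le_def by auto
  moreover have "finite (u i)" using finite_hom_Kr_part[OF u \<open>i < r\<close>] .
  ultimately have "T \<le> card (u i)" using j(3) card_mono order_trans by blast
  then have "i = j" using hom_light_heavy_part_unique[OF light u \<open>i < r\<close> _ j(1,2)] by simp
  then show False using add_mod_ne_self[OF j(1), of "r - k"] k unfolding i_def by simp
qed

lemma chromatic_number_le_light:
  assumes light: "hom_light r T n E" and r: "0 < r"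
  shows "chromatic_number (hom_Kr r {1..n} E) (strong_compat r) \<le> 2 * T + r"
  unfolding chromatic_number_def
proof (rule Least_le, rule exI[of _ "light_colour r T"], intro conjI ballI impI)
  fix v assume "v \<in> hom_Kr r {1..n} E"
  then show "light_colour r T v < 2 * T + r" using light_colour_less[OF light _ r] by blast
next
  fix u v
  assume u: "u \<in> hom_Kr r {1..n} E" and v: "v \<in> hom_Kr r {1..n} E"
    and adj: "strong_compat r u v"
  have "\<forall>i. r \<le> i \<longrightarrow> v i = {}" using hom_Kr_part_empty[OF v] by blast
  then obtain k where k: "0 < k" "k < r" and uw: "u \<noteq> cshift r k v"
    and cmp: "hom_le r u (cshift r k v) \<or> hom_le r (cshift r k v) u"
    using strong_compat_obtain_shift[OF adj] by blast
  show "light_colour r T u \<noteq> light_colour r T v"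
  proof
    assume eq: "light_colour r T u = light_colour r T v"
    show False
    proof (cases "\<forall>i<r. card (u i) < T")
      case True
      then have "\<forall>i<r. card (v i) < T"
        using eq light_colour_less_iff[OF light u r] light_colour_less_iff[OF light v r] by simp
      with True eq have "total_size r u = total_size r v" unfolding light_colour_def by simp
      then show False using total_size_neq_of_comparable_shift[OF u v r cmp uw] by contradiction
    next
      case False
      then have "\<not> (\<forall>i<r. card (v i) < T)"
        using eq light_colour_less_iff[OF light u r] light_colour_less_iff[OF light v r] by simp
      then obtain j' where j': "T \<le> card (v j')" "light_colour r T v = 2 * T + j'"
        using light_colour_heavy by blast
      obtain j where j: "j < r" "T \<le> card (u j)" "light_colour r T u = 2 * T + j"
        using light_colour_heavy[OF False] .
      have "j' = j" using eq j(3) j'(2) by simp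
      then show False using comparable_shift_moves_heavy_part[OF light u v k cmp j(1,2)] j'(1) by simp
    qed
  qed
qed

lemma card_pairs_le_twice_card_doubletons:
  fixes P :: "('a :: linorder \<times> 'a) set"
  assumes "finite P" "\<forall>(a, b)\<in>P. a \<noteq> b"
  shows "card P \<le> 2 * card ((\<lambda>(a, b). {a, b}) ` P)"
proof -
  let ?f = "\<lambda>(a, b). {a, b}"
  have "P \<subseteq> {p\<in>P. fst p < snd p} \<union> {p\<in>P. snd p < fst p}"
    using assms(2) by (auto simp: neq_iff)
  then have "card P \<le> card ({p\<in>P. fst p < snd p} \<union> {p\<in>P. snd p < fst p})"
    using assms(1) by (intro card_mono) auto
  also have "\<dots> \<le> card {p\<in>P. fst p < snd p} + card {p\<in>P. snd p < fst p}"
    by (rule card_Un_le)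
  also have "card {p\<in>P. fst p < snd p} \<le> card (?f ` P)"
    using assms(1) by (intro card_inj_on_le[of ?f]) (auto simp: inj_on_def doubleton_eq_iff)
  also have "card {p\<in>P. snd p < fst p} \<le> card (?f ` P)"
    using assms(1) by (intro card_inj_on_le[of ?f]) (auto simp: inj_on_def doubleton_eq_iff)
  finally show ?thesis by simp
qed

definition cross_pairs :: "nat \<Rightarrow> (nat \<Rightarrow> nat set) \<Rightarrow> nat set set" where
  "cross_pairs r w = {{a, b} | a b. \<exists>i<r. \<exists>i'<r. i \<noteq> i' \<and> a \<in> w i \<and> b \<in> w i'}"

lemma card_cross_pairs_ge:
  assumes fin: "\<forall>i<r. finite (w i)"
    and disj: "\<forall>i<r. \<forall>i'<r. i \<noteq> i' \<longrightarrow> w i \<inter> w i' = {}"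
    and m: "\<forall>i<r. card (w i) \<le> m"
  shows "total_size r w * (total_size r w - m) \<le> 2 * card (cross_pairs r w)"
proof -
  define s where "s = total_size r w"
  define U where "U = (\<Union>i<r. w i)"
  define P where "P = (\<Union>i<r. w i \<times> (U - w i))"
  have "finite U" unfolding U_def using fin by auto
  have "card U = s" unfolding U_def s_def total_size_def
    by (rule card_UN_disjoint) (use fin disj in auto)
  have "card P = (\<Sum>i<r. card (w i \<times> (U - w i)))" unfolding P_def
    by (rule card_UN_disjoint) (use fin \<open>finite U\<close> disj in auto)
  also have "\<dots> = (\<Sum>i<r. card (w i) * (s - card (w i)))"
  proof (rule sum.cong)
    fix i assume "i \<in> {..<r}"
    then have "w i \<subseteq> U" "finite (w i)" unfolding U_def using fin by auto
    then show "card (w i \<times> (U - w i)) = card (w i) * (s - card (w i))"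
      using \<open>card U = s\<close> by (simp add: card_cartesian_product card_Diff_subset)
  qed simp
  also have "\<dots> \<ge> (\<Sum>i<r. card (w i) * (s - m))"
    by (rule sum_mono) (use m in \<open>auto intro: mult_le_mono2 diff_le_mono2\<close>)
  finally have "s * (s - m) \<le> card P"
    unfolding s_def total_size_def by (simp add: sum_distrib_right)
  also have "\<dots> \<le> 2 * card ((\<lambda>(a, b). {a, b}) ` P)"
    using fin \<open>finite U\<close> unfolding P_def
    by (intro card_pairs_le_twice_card_doubletons) auto
  also have "card ((\<lambda>(a, b). {a, b}) ` P) \<le> card (cross_pairs r w)"
  proof (rule card_mono)
    have "cross_pairs r w \<subseteq> (\<lambda>(a, b). {a, b}) ` (U \<times> U)"
      unfolding cross_pairs_def U_def by auto
    then show "finite (cross_pairs r w)" using \<open>finite U\<close> finite_subset by blast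
    show "(\<lambda>(a, b). {a, b}) ` P \<subseteq> cross_pairs r w"
    proof
      fix e assume "e \<in> (\<lambda>(a, b). {a, b}) ` P"
      then obtain a b i where "e = {a, b}" "i < r" "a \<in> w i" "b \<in> U" "b \<notin> w i"
        unfolding P_def by auto
      moreover from \<open>b \<in> U\<close> obtain i' where "i' < r" "b \<in> w i'" unfolding U_def by auto
      ultimately show "e \<in> cross_pairs r w" unfolding cross_pairs_def by fastforce
    qed
  qed
  finally show ?thesis unfolding s_def by simp
qed

lemma obtain_subfamily_with_total_card:
  assumes "finite I" "\<forall>i\<in>I. finite (X i)" "t \<le> (\<Sum>i\<in>I. card (X i))"
  obtains Y where "\<forall>i\<in>I. Y i \<subseteq> X i" "(\<Sum>i\<in>I. card (Y i)) = t"
proof -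
  have "card (SIGMA i:I. X i) = (\<Sum>i\<in>I. card (X i))" using assms by (intro card_SigmaI) auto
  then obtain S where S: "S \<subseteq> (SIGMA i:I. X i)" "card S = t"
    using assms(3) obtain_subset_with_card_n by metis
  define Y where "Y = (\<lambda>i. {a. (i, a) \<in> S})"
  have "S = (SIGMA i:I. Y i)" using S(1) unfolding Y_def by auto
  moreover have "\<forall>i\<in>I. finite (Y i)"
    using S(1) assms(2) unfolding Y_def by (auto intro: finite_subset)
  ultimately have "(\<Sum>i\<in>I. card (Y i)) = t" using S(2) assms(1) by (simp add: card_SigmaI)
  moreover have "\<forall>i\<in>I. Y i \<subseteq> X i" using S(1) unfolding Y_def by auto
  ultimately show ?thesis using that by blast
qed

definition dense_witnesses :: "nat \<Rightarrow> nat \<Rightarrow> nat \<Rightarrow> (nat \<Rightarrow> nat set) set" where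
  "dense_witnesses r n T = {w. (\<forall>i. r \<le> i \<longrightarrow> w i = {}) \<and> (\<forall>i<r. w i \<subseteq> {1..n}) \<and>
     (\<forall>i<r. \<forall>i'<r. i \<noteq> i' \<longrightarrow> w i \<inter> w i' = {}) \<and>
     T \<le> total_size r w \<and> total_size r w \<le> 2 * T \<and>
     total_size r w * T \<le> 2 * card (cross_pairs r w)}"

text \<open>Keeping T elements outside a largest part and at most T inside it yields a tuple of total
  size s \<le> 2T in which every part has at most s - T elements, so that \<open>card_cross_pairs_ge\<close>
  gives s T / 2 cross pairs.\<close>

lemma obtain_trimmed_tuple:
  assumes fin: "\<forall>i<r. finite (x i)" and j: "j < r" "\<forall>i<r. card (x i) \<le> card (x j)"
    and rest: "T \<le> (\<Sum>i\<in>{..<r} - {j}. card (x i))"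
  obtains w where "\<forall>i<r. w i \<subseteq> x i" "\<forall>i. r \<le> i \<longrightarrow> w i = {}"
    "T \<le> total_size r w" "total_size r w \<le> 2 * T" "\<forall>i<r. card (w i) \<le> total_size r w - T"
proof -
  obtain Y where Y: "\<forall>i\<in>{..<r} - {j}. Y i \<subseteq> x i" "(\<Sum>i\<in>{..<r} - {j}. card (Y i)) = T"
    using obtain_subfamily_with_total_card[of "{..<r} - {j}" x T] fin rest by auto
  obtain B where B: "B \<subseteq> x j" "card B = min (card (x j)) T"
    using obtain_subset_with_card_n[of "min (card (x j)) T" "x j"] by auto
  define w where "w = (\<lambda>i. if i < r \<and> i \<noteq> j then Y i else if i = j then B else {})"
  have w_sub: "\<forall>i<r. w i \<subseteq> x i" using Y(1) B(1) unfolding w_def by auto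
  have w_j: "w j = B" using j(1) unfolding w_def by simp
  have w_rest: "(\<Sum>i\<in>{..<r} - {j}. card (w i)) = T"
    using Y(2) by (simp add: w_def)
  have w_size: "total_size r w = card B + T"
    using sum.remove[of "{..<r}" j "\<lambda>i. card (w i)"] j(1) w_j w_rest
    unfolding total_size_def by simp
  have "card (w i) \<le> card B" if "i < r" for i
  proof (cases "i = j")
    case False
    have "card (w i) \<le> card (x i)" using w_sub fin \<open>i < r\<close> by (simp add: card_mono)
    also have "\<dots> \<le> card (x j)" using j(2) \<open>i < r\<close> by simp
    finally have "card (w i) \<le> card (x j)" .
    moreover have "card (w i) \<le> T"
      using member_le_sum[of i "{..<r} - {j}" "\<lambda>i. card (w i)"] w_rest False \<open>i < r\<close> by simp
    ultimately show ?thesis using B(2) by simp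
  qed (simp add: w_j)
  moreover have "\<forall>i. r \<le> i \<longrightarrow> w i = {}" using j(1) unfolding w_def by auto
  ultimately show ?thesis using that w_sub w_size B(2) by simp
qed

lemma not_light_imp_dense_witness:
  assumes E: "E \<subseteq> vertex_pairs n" and not_light: "\<not> hom_light r T n E"
  shows "\<exists>w\<in>dense_witnesses r n T. cross_pairs r w \<subseteq> E"
proof -
  obtain x j where x: "x \<in> hom_Kr r {1..n} E"
    and j: "j < r" "\<forall>i<r. card (x i) \<le> card (x j)"
    and rest: "T \<le> (\<Sum>i\<in>{..<r} - {j}. card (x i))"
    using not_light unfolding hom_light_def by (auto simp: not_less)
  obtain w where w_sub: "\<forall>i<r. w i \<subseteq> x i" and w_out: "\<forall>i. r \<le> i \<longrightarrow> w i = {}"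
    and w_size: "T \<le> total_size r w" "total_size r w \<le> 2 * T"
    and w_parts: "\<forall>i<r. card (w i) \<le> total_size r w - T"
    using obtain_trimmed_tuple[OF _ j rest] finite_hom_Kr_part[OF x] by blast
  have w_fin: "\<forall>i<r. finite (w i)" using w_sub finite_hom_Kr_part[OF x] finite_subset by blast
  have disj: "\<forall>i<r. \<forall>i'<r. i \<noteq> i' \<longrightarrow> w i \<inter> w i' = {}"
    using hom_Kr_parts_disjoint[OF x E] w_sub by blast
  have "total_size r w * T \<le> 2 * card (cross_pairs r w)"
    using card_cross_pairs_ge[OF w_fin disj w_parts] w_size(1) by simp
  moreover have "\<forall>i<r. w i \<subseteq> {1..n}" using w_sub hom_Kr_part_subset[OF x] by blast
  ultimately have w_dense: "w \<in> dense_witnesses r n T"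
    unfolding dense_witnesses_def using w_out disj w_size by simp
  have "cross_pairs r w \<subseteq> E"
  proof
    fix e assume "e \<in> cross_pairs r w"
    then obtain a b i i' where e: "e = {a, b}" "i < r" "i' < r" "i \<noteq> i'" "a \<in> w i" "b \<in> w i'"
      unfolding cross_pairs_def by blast
    then have "a \<in> x i" "b \<in> x i'" using w_sub by auto
    with e show "e \<in> E" using hom_Kr_edge[OF x] by simp
  qed
  from this w_dense show ?thesis by (rule bexI)
qed

lemma cross_pairs_subset_vertex_pairs:
  assumes "w \<in> dense_witnesses r n T"
  shows "cross_pairs r w \<subseteq> vertex_pairs n"
proof
  fix e assume "e \<in> cross_pairs r w"
  then obtain a b i i' where e: "e = {a, b}" "i < r" "i' < r" "i \<noteq> i'" "a \<in> w i" "b \<in> w i'"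
    unfolding cross_pairs_def by blast
  have parts: "w i \<inter> w i' = {}" "w i \<subseteq> {1..n}" "w i' \<subseteq> {1..n}"
    using assms e(2-4) unfolding dense_witnesses_def by simp_all
  then have "a \<noteq> b" "a \<in> {1..n}" "b \<in> {1..n}" using e(5,6) by blast+
  with e show "e \<in> vertex_pairs n" unfolding vertex_pairs_def by blast
qed

lemma inj_on_Sigma_dense_witnesses:
  "inj_on (\<lambda>w. SIGMA i:{..<r}. w i) (dense_witnesses r n T)"
proof (rule inj_onI)
  fix w w' assume "w \<in> dense_witnesses r n T" "w' \<in> dense_witnesses r n T"
    and eq: "(SIGMA i:{..<r}. w i) = (SIGMA i:{..<r}. w' i)"
  show "w = w'"
  proof
    fix i
    show "w i = w' i"
    proof (cases "i < r")
      case True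
      then show ?thesis using eq by blast
    next
      case False
      then show ?thesis using \<open>w \<in> _\<close> \<open>w' \<in> _\<close> unfolding dense_witnesses_def by auto
    qed
  qed
qed

lemma Sigma_dense_witness:
  assumes "w \<in> dense_witnesses r n T"
  shows "(SIGMA i:{..<r}. w i) \<subseteq> {..<r} \<times> {1..n}"
    "card (SIGMA i:{..<r}. w i) = total_size r w"
proof -
  show "(SIGMA i:{..<r}. w i) \<subseteq> {..<r} \<times> {1..n}"
    using assms unfolding dense_witnesses_def by auto
  have "\<forall>i\<in>{..<r}. finite (w i)"
    using assms unfolding dense_witnesses_def by (auto intro: finite_subset)
  then show "card (SIGMA i:{..<r}. w i) = total_size r w" unfolding total_size_def by simp
qed

lemma finite_dense_witnesses: "finite (dense_witnesses r n T)"
proof (rule finite_imageD[OF _ inj_on_Sigma_dense_witnesses])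
  have "(\<lambda>w. SIGMA i:{..<r}. w i) ` dense_witnesses r n T \<subseteq> Pow ({..<r} \<times> {1..n})"
    using Sigma_dense_witness(1) by blast
  then show "finite ((\<lambda>w. SIGMA i:{..<r}. w i) ` dense_witnesses r n T)"
    by (rule finite_subset) simp
qed

lemma card_dense_witnesses_of_size:
  "card {w \<in> dense_witnesses r n T. total_size r w = s} \<le> (r * n) choose s"
proof -
  have "card {w \<in> dense_witnesses r n T. total_size r w = s}
      \<le> card {S. S \<subseteq> {..<r} \<times> {1..n} \<and> card S = s}"
  proof (rule card_inj_on_le)
    show "inj_on (\<lambda>w. SIGMA i:{..<r}. w i) {w \<in> dense_witnesses r n T. total_size r w = s}"
      using inj_on_Sigma_dense_witnesses by (rule inj_on_subset) auto
    show "(\<lambda>w. SIGMA i:{..<r}. w i) ` {w \<in> dense_witnesses r n T. total_size r w = s}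
        \<subseteq> {S. S \<subseteq> {..<r} \<times> {1..n} \<and> card S = s}"
      using Sigma_dense_witness[of _ r n T] by blast
  qed simp
  also have "\<dots> = (r * n) choose s" by (simp add: n_subsets card_cartesian_product)
  finally show ?thesis .
qed

lemma finite_vertex_pairs: "finite (vertex_pairs n)"
  unfolding vertex_pairs_def by (rule finite_subset[of _ "Pow {1..n}"]) auto

lemma set_pmf_gnp_half: "set_pmf (gnp_half n) = Pow (vertex_pairs n)"
  unfolding gnp_half_def all_graphs_def by (intro set_pmf_of_set) (auto simp: finite_vertex_pairs)

lemma prob_gnp_half_supset:
  assumes "F \<subseteq> vertex_pairs n"
  shows "measure_pmf.prob (gnp_half n) {E. F \<subseteq> E} = (1/2) ^ card F"
proof -
  define V where "V = vertex_pairs n"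
  have "finite V" unfolding V_def by (rule finite_vertex_pairs)
  have F: "F \<subseteq> V" "finite F" using assms \<open>finite V\<close> finite_subset unfolding V_def by auto
  have "bij_betw (\<lambda>E. E - F) (Pow V \<inter> {E. F \<subseteq> E}) (Pow (V - F))"
    by (rule bij_betw_byWitness[where f' = "\<lambda>S. S \<union> F"]) (use F in auto)
  then have "card (Pow V \<inter> {E. F \<subseteq> E}) = 2 ^ (card V - card F)"
    using bij_betw_same_card F \<open>finite V\<close> by (metis card_Diff_subset card_Pow finite_Diff)
  moreover have "(2::real) ^ card V = 2 ^ (card V - card F) * 2 ^ card F"
    using card_mono[OF \<open>finite V\<close> F(1)] by (simp add: power_add[symmetric])
  ultimately show ?thesis
    using \<open>finite V\<close> unfolding gnp_half_def all_graphs_def V_def[symmetric]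
    by (subst measure_pmf_of_set) (auto simp: card_Pow power_add power_one_over)
qed

lemma prob_not_light_le_sum_witnesses:
  "measure_pmf.prob (gnp_half n) {E. \<not> hom_light r T n E}
     \<le> (\<Sum>w\<in>dense_witnesses r n T. (1/2) ^ card (cross_pairs r w))"
proof -
  have "{E. \<not> hom_light r T n E} \<inter> set_pmf (gnp_half n)
      \<subseteq> (\<Union>w\<in>dense_witnesses r n T. {E. cross_pairs r w \<subseteq> E})"
  proof
    fix E assume "E \<in> {E. \<not> hom_light r T n E} \<inter> set_pmf (gnp_half n)"
    then have "E \<subseteq> vertex_pairs n" "\<not> hom_light r T n E" by (auto simp: set_pmf_gnp_half)
    then show "E \<in> (\<Union>w\<in>dense_witnesses r n T. {E. cross_pairs r w \<subseteq> E})"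
      using not_light_imp_dense_witness by blast
  qed
  then have "measure_pmf.prob (gnp_half n) ({E. \<not> hom_light r T n E} \<inter> set_pmf (gnp_half n))
      \<le> measure_pmf.prob (gnp_half n) (\<Union>w\<in>dense_witnesses r n T. {E. cross_pairs r w \<subseteq> E})"
    by (rule measure_pmf.finite_measure_mono) simp
  then have "measure_pmf.prob (gnp_half n) {E. \<not> hom_light r T n E}
      \<le> measure_pmf.prob (gnp_half n) (\<Union>w\<in>dense_witnesses r n T. {E. cross_pairs r w \<subseteq> E})"
    by (simp only: measure_Int_set_pmf)
  also have "\<dots> \<le> (\<Sum>w\<in>dense_witnesses r n T. measure_pmf.prob (gnp_half n) {E. cross_pairs r w \<subseteq> E})"
    by (rule measure_pmf.finite_measure_subadditive_finite) (auto simp: finite_dense_witnesses)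
  also have "\<dots> = (\<Sum>w\<in>dense_witnesses r n T. (1/2) ^ card (cross_pairs r w))"
    by (intro sum.cong refl prob_gnp_half_supset cross_pairs_subset_vertex_pairs)
  finally show ?thesis .
qed

lemma half_pow_card_cross_pairs_le:
  assumes "w \<in> dense_witnesses r n T"
  shows "(1/2::real) ^ card (cross_pairs r w) \<le> ((1/2) powr (real T / 2)) ^ total_size r w"
proof -
  have "real (total_size r w) * (real T / 2) \<le> real (card (cross_pairs r w))"
    using assms unfolding dense_witnesses_def by (simp add: of_nat_mult[symmetric] del: of_nat_mult)
  then have "(1/2::real) powr real (card (cross_pairs r w))
      \<le> (1/2) powr (real (total_size r w) * (real T / 2))"
    by (intro powr_mono') auto
  moreover have "(1/2::real) powr real (card (cross_pairs r w)) = (1/2) ^ card (cross_pairs r w)"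
    by (rule powr_realpow) simp
  moreover have "(1/2) powr (real (total_size r w) * (real T / 2))
      = ((1/2::real) powr (real T / 2)) ^ total_size r w"
    by (rule powr_power[symmetric]) simp
  ultimately show ?thesis by simp
qed

lemma choose_mult_power_le:
  fixes q :: real
  assumes "0 \<le> q" "1 \<le> s" "real N * q \<le> 1"
  shows "real (N choose s) * q ^ s \<le> real N * q"
proof -
  have "N choose s \<le> N ^ s"
    by (cases "s \<le> N") (simp_all add: binomial_le_pow binomial_eq_0)
  then have "real (N choose s) \<le> real N ^ s" by (metis of_nat_le_iff of_nat_power)
  then have "real (N choose s) * q ^ s \<le> (real N * q) ^ s"
    using assms(1) by (simp add: mult_right_mono power_mult_distrib)
  also have "\<dots> \<le> (real N * q) ^ 1"
    by (rule power_decreasing) (use assms in auto)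
  finally show ?thesis by simp
qed

lemma sum_dense_witness_weights_le:
  assumes "1 \<le> T" and q: "q = (1/2::real) powr (real T / 2)" and small: "real (r * n) * q \<le> 1"
  shows "(\<Sum>w\<in>dense_witnesses r n T. (1/2::real) ^ card (cross_pairs r w))
           \<le> (real T + 1) * (real (r * n) * q)"
proof -
  let ?W = "dense_witnesses r n T"
  have "0 \<le> q" using q by simp
  have "(\<Sum>w\<in>?W. (1/2::real) ^ card (cross_pairs r w)) \<le> (\<Sum>w\<in>?W. q ^ total_size r w)"
    unfolding q by (intro sum_mono half_pow_card_cross_pairs_le)
  also have "\<dots> = (\<Sum>s\<in>total_size r ` ?W. \<Sum>w\<in>{w\<in>?W. total_size r w = s}. q ^ total_size r w)"
    by (rule sum.image_gen[OF finite_dense_witnesses])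
  also have "\<dots> = (\<Sum>s\<in>total_size r ` ?W. real (card {w\<in>?W. total_size r w = s}) * q ^ s)"
    by (rule sum.cong) auto
  also have "\<dots> \<le> (\<Sum>s\<in>total_size r ` ?W. real ((r * n) choose s) * q ^ s)"
    by (rule sum_mono) (use card_dense_witnesses_of_size \<open>0 \<le> q\<close> in \<open>auto intro: mult_right_mono\<close>)
  also have "\<dots> \<le> (\<Sum>s\<in>{T..2 * T}. real ((r * n) choose s) * q ^ s)"
    by (rule sum_mono2) (use \<open>0 \<le> q\<close> in \<open>auto simp: dense_witnesses_def\<close>)
  also have "\<dots> \<le> (\<Sum>s\<in>{T..2 * T}. real (r * n) * q)"
    by (intro sum_mono choose_mult_power_le) (use \<open>0 \<le> q\<close> \<open>1 \<le> T\<close> small in auto)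
  also have "\<dots> = (real T + 1) * (real (r * n) * q)" by simp
  finally show ?thesis .
qed

definition light_threshold :: "real \<Rightarrow> nat \<Rightarrow> nat" where
  "light_threshold \<delta> n = nat \<lceil>(2 + \<delta>) * log 2 (real n)\<rceil>"

lemma light_threshold_bounds:
  assumes "1 \<le> n" "0 \<le> \<delta>"
  shows "(2 + \<delta>) * log 2 (real n) \<le> real (light_threshold \<delta> n)"
    "real (light_threshold \<delta> n) \<le> (2 + \<delta>) * log 2 (real n) + 1"
proof -
  have "0 \<le> (2 + \<delta>) * log 2 (real n)" using assms by simp
  then have "real (light_threshold \<delta> n) = of_int \<lceil>(2 + \<delta>) * log 2 (real n)\<rceil>"
    unfolding light_threshold_def by simp
  then show "(2 + \<delta>) * log 2 (real n) \<le> real (light_threshold \<delta> n)"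
    "real (light_threshold \<delta> n) \<le> (2 + \<delta>) * log 2 (real n) + 1" by linarith+
qed

lemma half_powr_light_threshold_le:
  assumes "2 \<le> n" "0 < \<delta>"
  shows "(1/2::real) powr (real (light_threshold \<delta> n) / 2) \<le> real n powr (-(1 + \<delta>/2))"
proof -
  have "(1/2::real) powr (real (light_threshold \<delta> n) / 2)
      \<le> (1/2) powr ((2 + \<delta>) * log 2 (real n) / 2)"
    using light_threshold_bounds(1)[of n \<delta>] assms by (intro powr_mono') auto
  also have "\<dots> = inverse ((2 powr log 2 (real n)) powr (1 + \<delta>/2))"
    by (simp add: powr_divide powr_powr field_simps)
  also have "\<dots> = real n powr (-(1 + \<delta>/2))"
    unfolding powr_minus using assms by simp
  finally show ?thesis .
qed

lemma prob_not_light_le: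
  assumes "2 \<le> n" "0 < \<delta>" and small: "real r * real n powr (-\<delta>/2) \<le> 1"
  shows "measure_pmf.prob (gnp_half n) {E. \<not> hom_light r (light_threshold \<delta> n) n E}
    \<le> ((2 + \<delta>) * log 2 (real n) + 2) * (real r * real n powr (-\<delta>/2))"
proof -
  define T where "T = light_threshold \<delta> n"
  define q where "q = (1/2::real) powr (real T / 2)"
  have T: "(2 + \<delta>) * log 2 (real n) \<le> real T" "real T \<le> (2 + \<delta>) * log 2 (real n) + 1"
    using light_threshold_bounds[of n \<delta>] assms(1,2) unfolding T_def by simp_all
  have "1 \<le> log 2 (real n)" using assms(1) by simp
  then have "2 * 1 \<le> (2 + \<delta>) * log 2 (real n)"
    using assms(2) by (intro mult_mono) auto
  then have "real 1 \<le> real T" using T(1) by simp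
  then have "1 \<le> T" by (simp only: of_nat_le_iff)
  have "real (r * n) * q \<le> real (r * n) * real n powr (-(1 + \<delta>/2))"
    using half_powr_light_threshold_le[OF assms(1,2)] unfolding q_def T_def
    by (intro mult_left_mono) auto
  also have "\<dots> = real r * (real n * real n powr (-(1 + \<delta>/2)))" by simp
  also have "real n * real n powr (-(1 + \<delta>/2)) = real n powr (-\<delta>/2)"
    using assms(1) by (simp add: powr_mult_base)
  finally have rnq: "real (r * n) * q \<le> real r * real n powr (-\<delta>/2)" .
  have "measure_pmf.prob (gnp_half n) {E. \<not> hom_light r T n E}
      \<le> (\<Sum>w\<in>dense_witnesses r n T. (1/2) ^ card (cross_pairs r w))"
    by (rule prob_not_light_le_sum_witnesses)
  also have "\<dots> \<le> (real T + 1) * (real (r * n) * q)"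
    using rnq small by (intro sum_dense_witness_weights_le[OF \<open>1 \<le> T\<close> q_def]) linarith
  also have "\<dots> \<le> ((2 + \<delta>) * log 2 (real n) + 2) * (real r * real n powr (-\<delta>/2))"
    by (rule mult_mono[OF _ rnq]) (use T(2) \<open>2 * 1 \<le> _\<close> in \<open>auto simp: q_def\<close>)
  finally show ?thesis unfolding T_def .
qed

lemma prob_not_light_tendsto_0:
  assumes "0 < \<delta>"
  shows "(\<lambda>n. measure_pmf.prob (gnp_half n) {E. \<not> hom_light r (light_threshold \<delta> n) n E})
           \<longlonglongrightarrow> 0"
proof (rule tendsto_sandwich[OF _ _ tendsto_const])
  show "(\<lambda>n. ((2 + \<delta>) * log 2 (real n) + 2) * (real r * real n powr (-\<delta>/2))) \<longlonglongrightarrow> 0"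
    using assms by real_asymp
  have "eventually (\<lambda>n::nat. real r * real n powr (-\<delta>/2) \<le> 1) sequentially"
    using assms by real_asymp
  with eventually_ge_at_top[of "2::nat"]
  show "eventually (\<lambda>n. measure_pmf.prob (gnp_half n) {E. \<not> hom_light r (light_threshold \<delta> n) n E}
      \<le> ((2 + \<delta>) * log 2 (real n) + 2) * (real r * real n powr (-\<delta>/2))) sequentially"
    by eventually_elim (rule prob_not_light_le[OF _ assms])
qed simp

lemma four_le_plus_two_div:
  assumes "2 \<le> r"
  shows "4 \<le> real r + 2 / (real r - 1)"
proof -
  consider "r = 2" | "r = 3" | "4 \<le> r" using assms by linarith
  then show ?thesis
  proof cases
    case 3
    then have "0 \<le> 2 / (real r - 1)" by simp
    with 3 show ?thesis by linarith
  qed simp_all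
qed

lemma eventually_light_imp_chromatic_le:
  assumes "0 < \<epsilon>" "2 \<le> r"
  shows "eventually (\<lambda>n. \<forall>E. hom_light r (light_threshold (\<epsilon>/4) n) n E \<longrightarrow>
      real (chromatic_number (hom_Kr r {1..n} E) (strong_compat r))
        \<le> (real r + 2 / (real r - 1) + \<epsilon>) * log 2 (real n)) sequentially"
proof -
  have "eventually (\<lambda>n::nat. 2 + real r \<le> \<epsilon>/2 * log 2 (real n)) sequentially"
    using assms(1) by real_asymp
  with eventually_ge_at_top[of "2::nat"] show ?thesis
  proof eventually_elim
    case (elim n)
    let ?l = "log 2 (real n)" and ?T = "light_threshold (\<epsilon>/4) n"
    show ?case
    proof (intro allI impI)
      fix E assume "hom_light r ?T n E"
      then have "chromatic_number (hom_Kr r {1..n} E) (strong_compat r) \<le> 2 * ?T + r"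
        using assms(2) by (intro chromatic_number_le_light) auto
      then have "real (chromatic_number (hom_Kr r {1..n} E) (strong_compat r))
          \<le> 2 * real ?T + real r" by (simp add: of_nat_mono[of _ "2 * ?T + r", simplified])
      also have "\<dots> \<le> 4 * ?l + \<epsilon> * ?l"
      proof -
        have "2 * ((2 + \<epsilon>/4) * ?l) = 4 * ?l + \<epsilon>/2 * ?l" by (simp add: algebra_simps)
        then show ?thesis
          using light_threshold_bounds(2)[of n "\<epsilon>/4"] elim assms(1) by simp
      qed
      also have "\<dots> \<le> (real r + 2 / (real r - 1) + \<epsilon>) * ?l"
      proof -
        have "4 * ?l \<le> (real r + 2 / (real r - 1)) * ?l"
          using four_le_plus_two_div[OF assms(2)] elim(1) by (intro mult_right_mono) auto
        then show ?thesis by (simp add: distrib_right)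
      qed
      finally show "real (chromatic_number (hom_Kr r {1..n} E) (strong_compat r))
          \<le> (real r + 2 / (real r - 1) + \<epsilon>) * ?l" .
    qed
  qed
qed

theorem theorem13:
  fixes \<epsilon> :: real and r :: nat
  assumes "\<epsilon> > 0" and "r \<ge> 2"
  shows "(\<lambda>n. measure_pmf.prob (gnp_half n)
            {E. real (chromatic_number (hom_Kr r {1..n} E) (strong_compat r))
                  \<le> (real r + 2 / (real r - 1) + \<epsilon>) * log 2 (real n)})
         \<longlonglongrightarrow> 1"
proof (rule tendsto_sandwich[OF _ _ _ tendsto_const])
  let ?light = "\<lambda>n. {E. hom_light r (light_threshold (\<epsilon>/4) n) n E}"
  have "(\<lambda>n. 1 - measure_pmf.prob (gnp_half n) (- ?light n)) \<longlonglongrightarrow> 1 - 0"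
    using prob_not_light_tendsto_0[of "\<epsilon>/4" r] assms(1)
    by (intro tendsto_diff tendsto_const) (simp add: Compl_eq)
  then show "(\<lambda>n. measure_pmf.prob (gnp_half n) (?light n)) \<longlonglongrightarrow> 1"
    using measure_pmf.prob_compl[of "- ?light _"] by simp
  show "eventually (\<lambda>n. measure_pmf.prob (gnp_half n) (?light n)
      \<le> measure_pmf.prob (gnp_half n) {E. real (chromatic_number (hom_Kr r {1..n} E)
          (strong_compat r)) \<le> (real r + 2 / (real r - 1) + \<epsilon>) * log 2 (real n)}) sequentially"
    using eventually_light_imp_chromatic_le[OF assms]
    by eventually_elim (intro measure_pmf.finite_measure_mono, auto)
qed (simp add: measure_pmf.prob_le_1)

end
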